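(* Let $\phi\colon P(\mathbb{R})\to P(\mathbb{R})$ be a surjective isometry with respect to the Kuiper distance. Then there exists a bijection $f\colon\mathbb{R}\to\mathbb{R}$ such that $$\phi(\mu)(\{f(x)\})=\mu(\{x\})\qquad(\mu\in P(\mathbb{R}),\ x\in\mathbb{R}).$$
   Context: $P(\mathbb{R})$ is the set of Borel probability measures on $\mathbb{R}$, with the Kuiper distance $d_{Ku}(\mu,\nu)=\sup\{|\mu(I)-\nu(I)| : I\text{ a non-degenerate interval of }\mathbb{R}\}$. *)

theory Defs
  imports "HOL-Probability.Probability"
begin

definition prob_measures_real :: "real measure set" where
  "prob_measures_real = {M. prob_space M \<and> sets M = sets borel}"

definition nondeg_intervals :: "real set set" where
  "nondeg_intervals = {I. is_interval I \<and> (\<exists>a\<in>I. \<exists>b\<in>I. a < b)}"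

definition kuiper_dist :: "real measure \<Rightarrow> real measure \<Rightarrow> real" where
  "kuiper_dist \<mu> \<nu> = (SUP I \<in> nondeg_intervals. \<bar>measure \<mu> I - measure \<nu> I\<bar>)"

end

theory Submission
  imports Defs
begin

text \<open>The Dirac measures are characterised metrically: \<open>\<mu>\<close> is a Dirac measure iff it is the
metric midpoint of no two distinct measures. Since \<open>d(\<mu>, \<delta>\<^sub>x) = 1 - \<mu>{x}\<close>, two measures
at distance \<open>D/2\<close> from \<open>\<delta>\<^sub>x\<close> both put mass \<open>1 - D/2\<close> at \<open>x\<close> and at most \<open>D/2\<close> elsewhere,
hence are at distance at most \<open>D/2\<close> from each other. Conversely, if \<open>\<mu>\<close> is not a Dirac
measure, its distribution function takes a value \<open>t \<in> (0,1)\<close> at some \<open>c\<close>, and reweighting \<open>\<mu>\<close>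
in opposite directions on \<open>(-\<infinity>, c]\<close> and its complement gives two measures that are
symmetric about \<open>\<mu>\<close> but differ on \<open>(-\<infinity>, c]\<close>. A surjective isometry preserves this
property, so it permutes the Dirac measures, \<open>\<delta>\<^sub>x \<mapsto> \<delta>\<^bsub>f x\<^esub>\<close>, and the identity
\<open>d(\<mu>, \<delta>\<^sub>x) = 1 - \<mu>{x}\<close> turns into \<open>\<phi>(\<mu>){f x} = \<mu>{x}\<close>.\<close>

definition tilt :: "'a measure \<Rightarrow> 'a set \<Rightarrow> real \<Rightarrow> 'a measure" where
  "tilt M A s = density M (\<lambda>x. ennreal (1 + s * (indicator A x - measure M A)))"

context prob_space
begin

lemma
  assumes A: "A \<in> events" and s: "\<bar>s\<bar> \<le> 1" and I: "I \<in> events"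
  shows emeasure_tilt: "emeasure (tilt M A s) I = ennreal (prob I + s * (prob (I \<inter> A) - prob A * prob I))"
    and measure_tilt: "measure (tilt M A s) I = prob I + s * (prob (I \<inter> A) - prob A * prob I)"
proof -
  define a where "a = 1 + s * (1 - prob A)"
  define b where "b = 1 - s * prob A"
  have ab: "0 \<le> a" "0 \<le> b"
  proof -
    have "\<bar>s * (1 - prob A)\<bar> \<le> 1" "\<bar>s * prob A\<bar> \<le> 1"
      using s prob_le_1[of A] by (simp_all add: abs_mult mult_le_one)
    then show "0 \<le> a" "0 \<le> b"
      unfolding a_def b_def abs_le_iff by linarith+
  qed
  have "emeasure (tilt M A s) I = (\<integral>\<^sup>+ x. ennreal (1 + s * (indicator A x - prob A)) * indicator I x \<partial>M)"
    unfolding tilt_def using A I by (intro emeasure_density) auto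
  also have "\<dots> = (\<integral>\<^sup>+ x. ennreal a * indicator (I \<inter> A) x + ennreal b * indicator (I - A) x \<partial>M)"
    by (rule nn_integral_cong) (simp add: a_def b_def indicator_def)
  also have "\<dots> = ennreal a * emeasure M (I \<inter> A) + ennreal b * emeasure M (I - A)"
    using A I by (simp add: nn_integral_add nn_integral_cmult_indicator)
  also have "\<dots> = ennreal (a * prob (I \<inter> A) + b * prob (I - A))"
    using ab by (simp add: emeasure_eq_measure ennreal_mult ennreal_plus[symmetric])
  also have eq: "a * prob (I \<inter> A) + b * prob (I - A) = prob I + s * (prob (I \<inter> A) - prob A * prob I)"
    using A I by (simp add: finite_measure_Diff' Int_commute a_def b_def algebra_simps)
  finally show emeasure: "emeasure (tilt M A s) I = ennreal (prob I + s * (prob (I \<inter> A) - prob A * prob I))" .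
  have "0 \<le> a * prob (I \<inter> A) + b * prob (I - A)"
    using ab by simp
  then show "measure (tilt M A s) I = prob I + s * (prob (I \<inter> A) - prob A * prob I)"
    unfolding measure_def[of "tilt M A s"] emeasure eq[symmetric] by (rule enn2real_ennreal)
qed

lemma prob_space_tilt:
  assumes "A \<in> events" "\<bar>s\<bar> \<le> 1"
  shows "prob_space (tilt M A s)"
proof
  show "emeasure (tilt M A s) (space (tilt M A s)) = 1"
    using emeasure_tilt[OF assms sets.top] assms(1) by (simp add: tilt_def prob_space sets.Int_space_eq1)
qed

end

lemma sets_tilt [simp]: "sets (tilt M A s) = sets M"
  by (simp add: tilt_def)

definition midpoint_rigid :: "('a \<Rightarrow> 'a \<Rightarrow> real) \<Rightarrow> 'a set \<Rightarrow> 'a \<Rightarrow> bool" where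
  "midpoint_rigid d S m \<longleftrightarrow>
     (\<forall>x\<in>S. \<forall>y\<in>S. 2 * d x m = d x y \<and> 2 * d m y = d x y \<longrightarrow> d x y = 0)"

lemma midpoint_rigid_isometric_image:
  assumes surj: "\<phi> ` S = S" and isom: "\<forall>x\<in>S. \<forall>y\<in>S. d (\<phi> x) (\<phi> y) = d x y"
    and m: "m \<in> S"
  shows "midpoint_rigid d S (\<phi> m) \<longleftrightarrow> midpoint_rigid d S m"
proof -
  have "midpoint_rigid d S (\<phi> m) \<longleftrightarrow>
      (\<forall>x\<in>S. \<forall>y\<in>S. 2 * d (\<phi> x) (\<phi> m) = d (\<phi> x) (\<phi> y) \<and>
         2 * d (\<phi> m) (\<phi> y) = d (\<phi> x) (\<phi> y) \<longrightarrow> d (\<phi> x) (\<phi> y) = 0)"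
    unfolding midpoint_rigid_def by (subst (1 2) surj[symmetric]) simp
  also have "\<dots> \<longleftrightarrow> midpoint_rigid d S m"
    unfolding midpoint_rigid_def using isom m by simp
  finally show ?thesis .
qed

context real_distribution
begin

lemma prob_Diff_singleton_le: "prob (A - {x}) \<le> 1 - prob {x}"
proof -
  have "prob (A - {x}) \<le> prob (UNIV - {x})"
    by (rule finite_measure_mono) auto
  then show ?thesis
    using prob_compl[of "{x}"] by simp
qed

lemma prob_split_singleton:
  "A \<in> sets borel \<Longrightarrow> prob A = prob (A - {x}) + (if x \<in> A then prob {x} else 0)"
  by (simp add: finite_measure_Diff' Int_insert_right)

lemma prob_Icc_tendsto_singleton: "((\<lambda>y. prob {x..y}) \<longlongrightarrow> prob {x}) (at_right x)"
proof -
  have Icc: "prob {x..y} = prob {x} + (cdf M y - cdf M x)" if "x < y" for y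
  proof -
    have "{x..y} = {x} \<union> {x<..y}"
      using that by auto
    then show ?thesis
      using that finite_measure_Union[of "{x}" "{x<..y}"] by (simp add: cdf_diff_eq)
  qed
  have "\<forall>\<^sub>F y in at_right x. prob {x} + (cdf M y - cdf M x) = prob {x..y}"
    using eventually_at_right_less[of x] by eventually_elim (simp add: Icc)
  moreover have "((\<lambda>y. prob {x} + (cdf M y - cdf M x)) \<longlongrightarrow> prob {x} + (cdf M x - cdf M x)) (at_right x)"
    using cdf_is_right_cont[of x] unfolding continuous_within by (intro tendsto_intros)
  ultimately show ?thesis
    by (simp add: tendsto_cong)
qed

lemma cdf_01_imp_return:
  assumes cdf_01: "\<And>c. cdf M c = 0 \<or> cdf M c = 1"
  shows "\<exists>x. M = return borel x"
proof -
  define S where "S = {c. cdf M c = 1}"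
  obtain c\<^sub>1 where "\<forall>c\<ge>c\<^sub>1. 1/2 < cdf M c"
    using order_tendstoD(1)[OF cdf_lim_at_top_prob, of "1/2"] by (auto simp: eventually_at_top_linorder)
  then have "c\<^sub>1 \<in> S"
    using cdf_01[of c\<^sub>1] unfolding S_def by auto
  obtain c\<^sub>0 where "\<forall>c\<le>c\<^sub>0. cdf M c < 1/2"
    using order_tendstoD(2)[OF cdf_lim_at_bot, of "1/2"] by (auto simp: eventually_at_bot_linorder)
  then have "c\<^sub>0 \<le> s" if "s \<in> S" for s
    using that unfolding S_def by (cases "s \<le> c\<^sub>0") auto
  then have "bdd_below S"
    by (rule bdd_belowI)
  define x where "x = Inf S"
  have above: "cdf M c = 1" if "x < c" for c
  proof -
    obtain s where "s \<in> S" "s < c"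
      using cInf_less_iff[OF _ \<open>bdd_below S\<close>] \<open>c\<^sub>1 \<in> S\<close> \<open>x < c\<close> unfolding x_def by blast
    then show ?thesis
      using cdf_nondecreasing[of s c] cdf_bounded_prob[of c] unfolding S_def by auto
  qed
  have "((\<lambda>_. 1) \<longlongrightarrow> cdf M x) (at_right x)"
    using cdf_is_right_cont[of x] unfolding continuous_within
    by (rule tendsto_cong[THEN iffD1, rotated]) (auto intro: eventually_mono[OF eventually_at_right_less] above)
  then have "cdf M x = 1"
    using tendsto_unique[OF trivial_limit_at_right_real _ tendsto_const] by metis
  moreover have "cdf M c = 0" if "c < x" for c
    using cInf_lower[OF _ \<open>bdd_below S\<close>, of c] that cdf_01[of c] unfolding S_def x_def by auto
  ultimately have "cdf M c = indicator {..c} x" for c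
    using above by (cases x c rule: linorder_cases) auto
  then have "cdf M = cdf (return borel x)"
    by (simp add: fun_eq_iff cdf_def measure_return)
  then have "M = return borel x"
    by (intro cdf_unique real_distribution_axioms)
      (simp_all add: real_distribution_def real_distribution_axioms_def prob_space_return)
  then show ?thesis ..
qed

end

lemma prob_measures_real_iff: "\<mu> \<in> prob_measures_real \<longleftrightarrow> real_distribution \<mu>"
  by (simp add: prob_measures_real_def real_distribution_def real_distribution_axioms_def)

lemma return_in_prob_measures_real: "return borel (x::real) \<in> prob_measures_real"
  by (simp add: prob_measures_real_def prob_space_return)

lemma measure_return_singleton: "measure (return borel (x::real)) {y} = (if y = x then 1 else 0)"
  by (simp add: measure_return)

lemma return_borel_inject: "return borel (x::real) = return borel y \<longleftrightarrow> x = y"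
  using measure_return_singleton[of x y] measure_return_singleton[of y y] by (auto split: if_splits)

lemma nondeg_intervalsI: "is_interval I \<Longrightarrow> a \<in> I \<Longrightarrow> b \<in> I \<Longrightarrow> a < b \<Longrightarrow> I \<in> nondeg_intervals"
  unfolding nondeg_intervals_def by blast

lemma Icc_in_nondeg_intervals: "a < b \<Longrightarrow> {a..b} \<in> nondeg_intervals"
  by (rule nondeg_intervalsI[of _ a b]) auto

lemma atMost_in_nondeg_intervals: "{..b} \<in> nondeg_intervals"
  by (rule nondeg_intervalsI[of _ "b - 1" b]) auto

lemma nondeg_interval_borel: "I \<in> nondeg_intervals \<Longrightarrow> I \<in> sets borel"
  unfolding nondeg_intervals_def by (auto intro: real_interval_borel_measurable)

lemma kuiper_dist_ge:
  assumes "\<mu> \<in> prob_measures_real" "\<nu> \<in> prob_measures_real" "I \<in> nondeg_intervals"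
  shows "\<bar>measure \<mu> I - measure \<nu> I\<bar> \<le> kuiper_dist \<mu> \<nu>"
proof -
  interpret \<mu>: prob_space \<mu> using assms(1) by (simp add: prob_measures_real_def)
  interpret \<nu>: prob_space \<nu> using assms(2) by (simp add: prob_measures_real_def)
  have "\<bar>measure \<mu> J - measure \<nu> J\<bar> \<le> 1" for J
    using \<mu>.prob_le_1[of J] \<nu>.prob_le_1[of J] measure_nonneg[of \<mu> J] measure_nonneg[of \<nu> J]
    unfolding abs_le_iff by linarith
  then have "bdd_above ((\<lambda>I. \<bar>measure \<mu> I - measure \<nu> I\<bar>) ` nondeg_intervals)"
    by (intro bdd_aboveI[of _ 1]) auto
  then show ?thesis
    unfolding kuiper_dist_def using assms(3) by (rule cSUP_upper2) simp
qed

lemma kuiper_dist_le: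
  "(\<And>I. I \<in> nondeg_intervals \<Longrightarrow> \<bar>measure \<mu> I - measure \<nu> I\<bar> \<le> c) \<Longrightarrow> kuiper_dist \<mu> \<nu> \<le> c"
  unfolding kuiper_dist_def using atMost_in_nondeg_intervals by (intro cSUP_least) auto

lemma kuiper_dist_commute: "kuiper_dist \<mu> \<nu> = kuiper_dist \<nu> \<mu>"
  unfolding kuiper_dist_def by (simp add: abs_minus_commute)

lemma kuiper_dist_nonneg:
  "\<mu> \<in> prob_measures_real \<Longrightarrow> \<nu> \<in> prob_measures_real \<Longrightarrow> 0 \<le> kuiper_dist \<mu> \<nu>"
  using kuiper_dist_ge[OF _ _ atMost_in_nondeg_intervals] by (meson abs_ge_zero order_trans)

lemma kuiper_dist_eq_scaled:
  assumes P: "\<mu> \<in> prob_measures_real" "\<nu> \<in> prob_measures_real"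
      "\<mu>' \<in> prob_measures_real" "\<nu>' \<in> prob_measures_real" and "0 < c"
    and scaled: "\<And>I. I \<in> nondeg_intervals \<Longrightarrow>
      \<bar>measure \<mu> I - measure \<nu> I\<bar> = c * \<bar>measure \<mu>' I - measure \<nu>' I\<bar>"
  shows "kuiper_dist \<mu> \<nu> = c * kuiper_dist \<mu>' \<nu>'"
proof (rule antisym)
  show "kuiper_dist \<mu> \<nu> \<le> c * kuiper_dist \<mu>' \<nu>'"
    using kuiper_dist_ge[OF P(3,4)] \<open>0 < c\<close> by (intro kuiper_dist_le) (simp add: scaled)
  have "kuiper_dist \<mu>' \<nu>' \<le> kuiper_dist \<mu> \<nu> / c"
    using kuiper_dist_ge[OF P(1,2)] \<open>0 < c\<close> by (intro kuiper_dist_le) (simp add: scaled field_simps)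
  then show "c * kuiper_dist \<mu>' \<nu>' \<le> kuiper_dist \<mu> \<nu>"
    using \<open>0 < c\<close> by (simp add: field_simps)
qed

lemma kuiper_midpoint:
  assumes P: "\<nu>\<^sub>1 \<in> prob_measures_real" "\<mu> \<in> prob_measures_real" "\<nu>\<^sub>2 \<in> prob_measures_real"
    and sym: "\<And>I. I \<in> nondeg_intervals \<Longrightarrow> measure \<nu>\<^sub>1 I - measure \<mu> I = measure \<mu> I - measure \<nu>\<^sub>2 I"
  shows "2 * kuiper_dist \<nu>\<^sub>1 \<mu> = kuiper_dist \<nu>\<^sub>1 \<nu>\<^sub>2" "2 * kuiper_dist \<mu> \<nu>\<^sub>2 = kuiper_dist \<nu>\<^sub>1 \<nu>\<^sub>2"
proof -
  have diff: "measure \<nu>\<^sub>1 I - measure \<nu>\<^sub>2 I = 2 * (measure \<nu>\<^sub>1 I - measure \<mu> I)"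
    "measure \<nu>\<^sub>1 I - measure \<nu>\<^sub>2 I = 2 * (measure \<mu> I - measure \<nu>\<^sub>2 I)"
    if "I \<in> nondeg_intervals" for I
    using sym[OF that] by auto
  have "kuiper_dist \<nu>\<^sub>1 \<nu>\<^sub>2 = 2 * kuiper_dist \<nu>\<^sub>1 \<mu>"
    by (rule kuiper_dist_eq_scaled[OF P(1,3,1,2)]) (simp_all only: diff(1) abs_mult abs_numeral zero_less_numeral)
  moreover have "kuiper_dist \<nu>\<^sub>1 \<nu>\<^sub>2 = 2 * kuiper_dist \<mu> \<nu>\<^sub>2"
    by (rule kuiper_dist_eq_scaled[OF P(1,3,2,3)]) (simp_all only: diff(2) abs_mult abs_numeral zero_less_numeral)
  ultimately show "2 * kuiper_dist \<nu>\<^sub>1 \<mu> = kuiper_dist \<nu>\<^sub>1 \<nu>\<^sub>2" "2 * kuiper_dist \<mu> \<nu>\<^sub>2 = kuiper_dist \<nu>\<^sub>1 \<nu>\<^sub>2"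
    by simp_all
qed

lemma kuiper_dist_return:
  assumes \<mu>: "\<mu> \<in> prob_measures_real"
  shows "kuiper_dist \<mu> (return borel x) = 1 - measure \<mu> {x}"
proof (rule antisym)
  interpret real_distribution \<mu>
    using \<mu> by (simp add: prob_measures_real_iff)
  show "kuiper_dist \<mu> (return borel x) \<le> 1 - prob {x}"
  proof (rule kuiper_dist_le)
    fix I assume "I \<in> nondeg_intervals"
    then have "I \<in> sets borel"
      by (rule nondeg_interval_borel)
    then have split: "prob I = prob (I - {x}) + (if x \<in> I then prob {x} else 0)"
      and return: "measure (return borel x) I = (if x \<in> I then 1 else 0)"
      by (simp_all add: prob_split_singleton measure_return)
    show "\<bar>prob I - measure (return borel x) I\<bar> \<le> 1 - prob {x}"
      using split return prob_Diff_singleton_le[of I x] prob_le_1[of I] prob_le_1[of "{x}"]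
        measure_nonneg[of \<mu> "I - {x}"] unfolding abs_le_iff
      by (cases "x \<in> I") ((simp_all only: if_True if_False), linarith+)
  qed
  have "\<forall>\<^sub>F y in at_right x. 1 - prob {x..y} \<le> kuiper_dist \<mu> (return borel x)"
  proof (rule eventually_mono[OF eventually_at_right_less])
    fix y assume "x < y"
    then have "measure (return borel x) {x..y} = 1"
      by (simp add: measure_return)
    then show "1 - prob {x..y} \<le> kuiper_dist \<mu> (return borel x)"
      using kuiper_dist_ge[OF \<mu> return_in_prob_measures_real[of x] Icc_in_nondeg_intervals[OF \<open>x < y\<close>]]
      unfolding abs_le_iff by linarith
  qed
  then show "1 - prob {x} \<le> kuiper_dist \<mu> (return borel x)"
    using prob_Icc_tendsto_singleton
    by (intro tendsto_upperbound[of "\<lambda>y. 1 - prob {x..y}" _ "at_right x"] tendsto_intros) simp_all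
qed

lemma midpoint_rigid_return: "midpoint_rigid kuiper_dist prob_measures_real (return borel x)"
  unfolding midpoint_rigid_def
proof (intro ballI impI)
  fix \<nu>\<^sub>1 \<nu>\<^sub>2 assume P: "\<nu>\<^sub>1 \<in> prob_measures_real" "\<nu>\<^sub>2 \<in> prob_measures_real"
  assume mid: "2 * kuiper_dist \<nu>\<^sub>1 (return borel x) = kuiper_dist \<nu>\<^sub>1 \<nu>\<^sub>2 \<and>
    2 * kuiper_dist (return borel x) \<nu>\<^sub>2 = kuiper_dist \<nu>\<^sub>1 \<nu>\<^sub>2"
  define D where "D = kuiper_dist \<nu>\<^sub>1 \<nu>\<^sub>2"
  interpret \<nu>\<^sub>1: real_distribution \<nu>\<^sub>1
    using P(1) by (simp add: prob_measures_real_iff)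
  interpret \<nu>\<^sub>2: real_distribution \<nu>\<^sub>2
    using P(2) by (simp add: prob_measures_real_iff)
  have atom: "1 - measure \<nu>\<^sub>1 {x} = D / 2" "1 - measure \<nu>\<^sub>2 {x} = D / 2"
    using mid kuiper_dist_return[OF P(1)] kuiper_dist_return[OF P(2)]
    by (simp_all add: D_def kuiper_dist_commute[of "return borel x"])
  have "D \<le> D / 2"
    unfolding D_def
  proof (rule kuiper_dist_le)
    fix I assume "I \<in> nondeg_intervals"
    then have "I \<in> sets borel"
      by (rule nondeg_interval_borel)
    then have "measure \<nu>\<^sub>1 I - measure \<nu>\<^sub>2 I = measure \<nu>\<^sub>1 (I - {x}) - measure \<nu>\<^sub>2 (I - {x})"
      using \<nu>\<^sub>1.prob_split_singleton[of I x] \<nu>\<^sub>2.prob_split_singleton[of I x] atom by simp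
    then show "\<bar>measure \<nu>\<^sub>1 I - measure \<nu>\<^sub>2 I\<bar> \<le> kuiper_dist \<nu>\<^sub>1 \<nu>\<^sub>2 / 2"
      using \<nu>\<^sub>1.prob_Diff_singleton_le[of I x] \<nu>\<^sub>2.prob_Diff_singleton_le[of I x] atom
        measure_nonneg[of \<nu>\<^sub>1 "I - {x}"] measure_nonneg[of \<nu>\<^sub>2 "I - {x}"]
      unfolding D_def abs_le_iff by linarith
  qed
  moreover have "0 \<le> D"
    unfolding D_def using P by (rule kuiper_dist_nonneg)
  ultimately show "kuiper_dist \<nu>\<^sub>1 \<nu>\<^sub>2 = 0"
    unfolding D_def by linarith
qed

lemma midpoint_rigid_cdf_01:
  assumes \<mu>: "\<mu> \<in> prob_measures_real" and rigid: "midpoint_rigid kuiper_dist prob_measures_real \<mu>"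
  shows "cdf \<mu> c = 0 \<or> cdf \<mu> c = 1"
proof (rule ccontr)
  interpret real_distribution \<mu>
    using \<mu> by (simp add: prob_measures_real_iff)
  define A where "A = {..c}"
  define t where "t = prob A"
  assume "\<not> (cdf \<mu> c = 0 \<or> cdf \<mu> c = 1)"
  moreover have "0 \<le> t" "t \<le> 1"
    by (simp_all add: t_def)
  ultimately have t: "0 < t" "t < 1"
    unfolding t_def A_def cdf_def by linarith+
  define \<nu>\<^sub>1 where "\<nu>\<^sub>1 = tilt \<mu> A 1"
  define \<nu>\<^sub>2 where "\<nu>\<^sub>2 = tilt \<mu> A (-1)"
  have A: "A \<in> events"
    by (simp add: A_def)
  have P: "\<nu>\<^sub>1 \<in> prob_measures_real" "\<nu>\<^sub>2 \<in> prob_measures_real"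
    using prob_space_tilt[OF A] by (simp_all add: \<nu>\<^sub>1_def \<nu>\<^sub>2_def prob_measures_real_def)
  have "measure \<nu>\<^sub>1 I - prob I = prob I - measure \<nu>\<^sub>2 I" if "I \<in> sets borel" for I
    using that measure_tilt[OF A, of 1 I] measure_tilt[OF A, of "-1" I] by (simp add: \<nu>\<^sub>1_def \<nu>\<^sub>2_def)
  then have "kuiper_dist \<nu>\<^sub>1 \<nu>\<^sub>2 = 0"
    using rigid P kuiper_midpoint[OF P(1) \<mu> P(2)] nondeg_interval_borel
    unfolding midpoint_rigid_def by blast
  moreover have "measure \<nu>\<^sub>1 A - measure \<nu>\<^sub>2 A = 2 * (t - t * t)"
    using measure_tilt[OF A _ A, of 1] measure_tilt[OF A _ A, of "-1"] by (simp add: \<nu>\<^sub>1_def \<nu>\<^sub>2_def t_def)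
  moreover have "0 < t - t * t"
    using t mult_strict_left_mono[of t 1 t] by simp
  ultimately show False
    using kuiper_dist_ge[OF P atMost_in_nondeg_intervals[of c, folded A_def]] by simp
qed

lemma midpoint_rigid_iff_return:
  "\<mu> \<in> prob_measures_real \<Longrightarrow>
    midpoint_rigid kuiper_dist prob_measures_real \<mu> \<longleftrightarrow> (\<exists>x. \<mu> = return borel x)"
proof
  assume "\<mu> \<in> prob_measures_real" "midpoint_rigid kuiper_dist prob_measures_real \<mu>"
  then show "\<exists>x. \<mu> = return borel x"
    using midpoint_rigid_cdf_01 by (intro real_distribution.cdf_01_imp_return) (simp_all add: prob_measures_real_iff)
next
  assume "\<exists>x. \<mu> = return borel x"
  then show "midpoint_rigid kuiper_dist prob_measures_real \<mu>"
    using midpoint_rigid_return by blast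
qed

lemma kuiper_isometry_permutes_returns:
  assumes surj: "\<phi> ` prob_measures_real = prob_measures_real"
    and isom: "\<forall>\<mu>\<in>prob_measures_real. \<forall>\<nu>\<in>prob_measures_real. kuiper_dist (\<phi> \<mu>) (\<phi> \<nu>) = kuiper_dist \<mu> \<nu>"
  shows "\<exists>f. bij f \<and> (\<forall>x. \<phi> (return borel x) = return borel (f x))"
proof -
  have \<phi>_P: "\<phi> \<mu> \<in> prob_measures_real" if "\<mu> \<in> prob_measures_real" for \<mu>
    using surj that by blast
  have rigid_iff: "midpoint_rigid kuiper_dist prob_measures_real (\<phi> \<mu>) \<longleftrightarrow> (\<exists>x. \<mu> = return borel x)"
    if "\<mu> \<in> prob_measures_real" for \<mu>
    using midpoint_rigid_isometric_image[OF surj isom that] midpoint_rigid_iff_return[OF that] by simp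
  have "\<exists>y. \<phi> (return borel x) = return borel y" for x
    using rigid_iff[OF return_in_prob_measures_real] midpoint_rigid_iff_return[OF \<phi>_P]
      return_in_prob_measures_real by blast
  then obtain f where f: "\<And>x. \<phi> (return borel x) = return borel (f x)"
    by metis
  have "inj f"
  proof (rule injI)
    fix x y assume "f x = f y"
    have "kuiper_dist (return borel x) (return borel y) = kuiper_dist (return borel (f x)) (return borel (f y))"
      using isom return_in_prob_measures_real by (simp flip: f)
    also have "\<dots> = 0"
      using \<open>f x = f y\<close> by (simp add: kuiper_dist_return return_in_prob_measures_real measure_return_singleton)
    finally have "kuiper_dist (return borel x) (return borel y) = 0" .
    then show "x = y"
      using kuiper_dist_return[OF return_in_prob_measures_real] measure_return_singleton
      by (simp split: if_splits)
  qed
  moreover have "y \<in> range f" for y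
  proof -
    obtain \<mu> where \<mu>: "\<mu> \<in> prob_measures_real" "\<phi> \<mu> = return borel y"
      using surj return_in_prob_measures_real by (metis imageE)
    then obtain x where "\<mu> = return borel x"
      using rigid_iff midpoint_rigid_return by metis
    then show "y \<in> range f"
      using \<mu>(2) f return_borel_inject by auto
  qed
  ultimately show ?thesis
    using f by (auto simp: bij_def)
qed

theorem lemma3p2:
  fixes \<phi> :: "real measure \<Rightarrow> real measure"
  assumes surj: "\<phi> ` prob_measures_real = prob_measures_real"
    and isom: "\<forall>\<mu>\<in>prob_measures_real. \<forall>\<nu>\<in>prob_measures_real.
                 kuiper_dist (\<phi> \<mu>) (\<phi> \<nu>) = kuiper_dist \<mu> \<nu>"
  shows "\<exists>f :: real \<Rightarrow> real. bij f \<and>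
           (\<forall>\<mu>\<in>prob_measures_real. \<forall>x. measure (\<phi> \<mu>) {f x} = measure \<mu> {x})"
proof -
  obtain f where "bij f" and f: "\<And>x. \<phi> (return borel x) = return borel (f x)"
    using kuiper_isometry_permutes_returns[OF surj isom] by blast
  have "measure (\<phi> \<mu>) {f x} = measure \<mu> {x}" if \<mu>: "\<mu> \<in> prob_measures_real" for \<mu> x
  proof -
    have "\<phi> \<mu> \<in> prob_measures_real"
      using surj \<mu> by blast
    then have "measure (\<phi> \<mu>) {f x} = 1 - kuiper_dist (\<phi> \<mu>) (\<phi> (return borel x))"
      by (simp add: f kuiper_dist_return)
    also have "\<dots> = 1 - kuiper_dist \<mu> (return borel x)"
      using isom \<mu> return_in_prob_measures_real by simp
    also have "\<dots> = measure \<mu> {x}"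
      by (simp add: kuiper_dist_return[OF \<mu>])
    finally show ?thesis .
  qed
  with \<open>bij f\<close> show ?thesis
    by blast
qed

end
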